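(* Let $n\ge n_0\ge0$ be integers, let $u=(u_k)_{k\ge0}$ be a sequence of positive reals that is $\alpha$-moderate from $n_0$ onwards, and let $(w_k)_{k\ge0}\subset\mathbb{R}^d$, $w^*\in\mathbb{R}^d$ satisfy $\|w_k-w^*\|\le u_k$ for all $n_0\le k\le n$. Then $$\|T_{n+1}\|\le\frac{2e^{q_1/2}}{q_1}\,C_U\,\|W_1W_2^{-1}\|\,C_\theta\,\frac{\alpha_n}{\beta_n}u_n .$$
   Context: $1>\alpha>\beta>0$, $\alpha_n=(n+1)^{-\alpha}$, $\beta_n=(n+1)^{-\beta}$. $X_1\in\mathbb{R}^{d\times d}$ with $X_1+X_1^\top$ positive definite, $q_1=\lambda_{\min}(X_1+X_1^\top)/4$; $W_1\in\mathbb{R}^{d\times d}$, $W_2\in\mathbb{R}^{d\times d}$ invertible. $C_\theta$ is the constant $\max\{1,\sqrt{\max_{0\le\ell_1\le\ell_2\le K}\prod_{\ell=\ell_1}^{\ell_2}e^{\alpha_\ell(\mu+2q_1)}}\}$ with $\mu=-\lambda_{\min}(X_1+X_1^\top)+\lambda_{\max}(X_1^\top X_1)$ and $K=\lceil(\lambda_{\max}(X_1^\top X_1)/(\lambda_{\min}(X_1+X_1^\top)-2q_1))^{1/\alpha}\rceil$. $C_U=\|X_1\|+2(\alpha-\beta)(1+\|X_1\|)$. $T_{n+1}=\sum_{k=n_0+1}^{n}\Big(\prod_{j=k+1}^{n}(I-\alpha_jX_1)\Big)\Big[\frac{\alpha_k}{\beta_k}I-\frac{\alpha_{k-1}}{\beta_{k-1}}(I-\alpha_kX_1)\Big]W_1W_2^{-1}(w_k-w^*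 )$ (empty products are $I$). A positive sequence $u$ is $\alpha$-moderate from $k_0$ onwards if $\frac{u_k}{u_{k+1}}\le\frac{\alpha_{k+1}}{\alpha_k}\frac{\beta_k}{\beta_{k+1}}e^{(q_1/2)\alpha_{k+1}}$ for all $k\ge k_0$. Norms are spectral/Euclidean. *)

theory Defs
  imports "HOL-Analysis.Analysis"
begin

definition eigvals :: "real^'n^'n \<Rightarrow> real set" where
  "eigvals A = {l. \<exists>v. v \<noteq> 0 \<and> A *v v = l *\<^sub>R v}"

definition lam_min :: "real^'n^'n \<Rightarrow> real" where
  "lam_min A = Min (eigvals A)"

definition lam_max :: "real^'n^'n \<Rightarrow> real" where
  "lam_max A = Max (eigvals A)"

definition spec_norm :: "real^'n^'m \<Rightarrow> real" where
  "spec_norm A = onorm (\<lambda>x. A *v x)"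

definition pos_def :: "real^'n^'n \<Rightarrow> bool" where
  "pos_def A \<longleftrightarrow> (\<forall>x. x \<noteq> 0 \<longrightarrow> x \<bullet> (A *v x) > 0)"

definition step :: "real \<Rightarrow> nat \<Rightarrow> real" where
  "step a n = (real n + 1) powr (- a)"

definition q1 :: "real^'n^'n \<Rightarrow> real" where
  "q1 X = lam_min (X + transpose X) / 4"

definition mu :: "real^'n^'n \<Rightarrow> real" where
  "mu X = - lam_min (X + transpose X) + lam_max (transpose X ** X)"

definition K_const :: "real \<Rightarrow> real^'n^'n \<Rightarrow> nat" where
  "K_const a X = nat \<lceil>(lam_max (transpose X ** X) / (lam_min (X + transpose X) - 2 * q1 X)) powr (1 / a)\<rceil>"

definition C_theta :: "real \<Rightarrow> real^'n^'n \<Rightarrow> real" where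
  "C_theta a X = max 1 (sqrt (Max {(\<Prod>l\<in>{l1..l2}. exp (step a l * (mu X + 2 * q1 X))) | l1 l2.
       l1 \<le> l2 \<and> l2 \<le> K_const a X}))"

definition C_U :: "real \<Rightarrow> real \<Rightarrow> real^'n^'n \<Rightarrow> real" where
  "C_U a b X = spec_norm X + 2 * (a - b) * (1 + spec_norm X)"

text \<open>Ordered matrix product f(k+1) ** ... ** f(n); identity if empty.\<close>
definition mprod :: "(nat \<Rightarrow> real^'n^'n) \<Rightarrow> nat \<Rightarrow> nat \<Rightarrow> real^'n^'n" where
  "mprod f k n = foldr (\<lambda>j M. f j ** M) [Suc k..<Suc n] (mat 1)"

definition T_next :: "real \<Rightarrow> real \<Rightarrow> real^'n^'n \<Rightarrow> real^'n^'n \<Rightarrow> real^'n^'n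
    \<Rightarrow> (nat \<Rightarrow> real^'n) \<Rightarrow> real^'n \<Rightarrow> nat \<Rightarrow> nat \<Rightarrow> real^'n" where
  "T_next a b X W1 W2 w ws n0 n =
    (\<Sum>k\<in>{n0+1..n}.
       (mprod (\<lambda>j. mat 1 - step a j *\<^sub>R X) k n
        ** ((step a k / step b k) *\<^sub>R mat 1
            - (step a (k - 1) / step b (k - 1)) *\<^sub>R (mat 1 - step a k *\<^sub>R X))
        ** W1 ** matrix_inv W2) *v (w k - ws))"

definition moderate :: "real \<Rightarrow> real \<Rightarrow> real \<Rightarrow> nat \<Rightarrow> (nat \<Rightarrow> real) \<Rightarrow> bool" where
  "moderate a b q k0 u \<longleftrightarrow> (\<forall>k\<ge>k0. u k / u (Suc k)
      \<le> step a (Suc k) / step a k * (step b k / step b (Suc k)) * exp ((q / 2) * step a (Suc k)))"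

end

theory Submission
  imports Defs
begin

text \<open>
  Each summand of \<open>T\<^sub>n\<^sub>+\<^sub>1\<close> is bounded factor by factor. A factor \<open>I - \<alpha>\<^sub>j X\<^sub>1\<close> has norm at most
  \<open>exp(-q\<^sub>1 \<alpha>\<^sub>j)\<close> once \<open>\<alpha>\<^sub>j\<close> is small (\<open>j > K\<close>), and the finitely many earlier factors
  together cost at most \<open>C\<^sub>\<theta>\<close>. The bracket has norm at most \<open>C\<^sub>U \<alpha>\<^sub>k (\<alpha>\<^sub>k/\<beta>\<^sub>k)\<close>, by a
  Bernoulli estimate for the ratio \<open>\<alpha>\<^sub>k\<^sub>-\<^sub>1/\<beta>\<^sub>k\<^sub>-\<^sub>1\<close>. Moderateness carries \<open>(\<alpha>\<^sub>k/\<beta>\<^sub>k) u\<^sub>k\<close> to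
  \<open>(\<alpha>\<^sub>n/\<beta>\<^sub>n) u\<^sub>n\<close> at the price of half of the contraction. What remains,
  \<open>\<Sum>\<^sub>k \<alpha>\<^sub>k exp(-(q\<^sub>1/2) \<Sum>\<^sub>j\<^sub>>\<^sub>k \<alpha>\<^sub>j)\<close>, is a Riemann sum for the integral of \<open>exp(-q\<^sub>1 t/2)\<close>;
  it telescopes to at most \<open>2 exp(q\<^sub>1/2)/q\<^sub>1\<close>.
\<close>


lemma quadratic_nonneg_imp_linear_coeff_zero:
  fixes p q :: real
  assumes "\<And>t. p * t + q * t^2 \<ge> 0"
  shows "p = 0"
proof (rule ccontr)
  assume "p \<noteq> 0"
  define s where "s = \<bar>q\<bar> + 1"
  have s0: "s > 0" by (simp add: s_def)
  define t where "t = - p / (2 * s)"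
  have "p * t = - (p^2) / (2 * s)" by (simp add: t_def power2_eq_square)
  moreover have "q * t^2 \<le> s * t^2" by (rule mult_right_mono) (auto simp: s_def)
  moreover have "s * t^2 = p^2 / (4 * s)"
    using s0 by (simp add: t_def power_divide power2_eq_square)
  moreover have "p^2 > 0" using \<open>p \<noteq> 0\<close> by simp
  ultimately have "p * t + q * t^2 \<le> - (p^2) / (4 * s)" using s0 by (simp add: field_simps)
  moreover have "- (p^2) / (4 * s) < 0" using s0 \<open>p^2 > 0\<close> by simp
  ultimately show False using assms[of t] by linarith
qed

lemma inner_transpose_mult: "x \<bullet> (transpose A *v y) = (A *v x) \<bullet> (y::real^'n)"
  by (metis dot_lmul_matrix vector_transpose_matrix)

subsection \<open>Extreme eigenvalues of symmetric matrices\<close>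

lemma rayleigh_quotient_min_attained:
  fixes A :: "real^'n^'n"
  obtains v0 where "norm v0 = 1" "\<And>v. (v0 \<bullet> (A *v v0)) * (v \<bullet> v) \<le> v \<bullet> (A *v v)"
proof -
  let ?S = "sphere (0::real^'n) 1"
  have "axis undefined 1 \<in> ?S" by simp
  hence "?S \<noteq> {}" by blast
  moreover have "continuous_on ?S (\<lambda>x. x \<bullet> (A *v x))"
    by (intro continuous_intros linear_continuous_on matrix_vector_mul_bounded_linear)
  ultimately obtain v0 where v0: "v0 \<in> ?S" "\<And>y. y \<in> ?S \<Longrightarrow> v0 \<bullet> (A *v v0) \<le> y \<bullet> (A *v y)"
    using continuous_attains_inf[of ?S] compact_sphere by blast
  have "(v0 \<bullet> (A *v v0)) * (v \<bullet> v) \<le> v \<bullet> (A *v v)" for v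
  proof (cases "v = 0")
    case False
    hence nv: "norm v > 0" by simp
    let ?y = "(1 / norm v) *\<^sub>R v"
    have "?y \<in> ?S" using nv by simp
    hence "v0 \<bullet> (A *v v0) \<le> ?y \<bullet> (A *v ?y)" using v0 by blast
    also have "\<dots> = (v \<bullet> (A *v v)) / (norm v)^2"
      by (simp only: matrix_vector_mult_scaleR inner_scaleR_left inner_scaleR_right)
         (simp add: power2_eq_square)
    finally show ?thesis using nv by (simp add: field_simps power2_norm_eq_inner)
  qed simp
  thus thesis using that v0(1) by simp
qed

text \<open>The minimum of the Rayleigh quotient is an eigenvalue: perturbing the minimiser \<open>v\<^sub>0\<close> in
  the direction of the residual \<open>A v\<^sub>0 - m v\<^sub>0\<close> changes the quotient to first order unless the
  residual vanishes.\<close>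
lemma symmetric_rayleigh_min_eigval:
  fixes A :: "real^'n^'n"
  assumes sym: "transpose A = A"
  shows "\<exists>m\<in>eigvals A. \<forall>v. m * (v \<bullet> v) \<le> v \<bullet> (A *v v)"
proof -
  obtain v0 where v0: "norm v0 = 1"
    and rayleigh: "\<And>v. (v0 \<bullet> (A *v v0)) * (v \<bullet> v) \<le> v \<bullet> (A *v v)"
    using rayleigh_quotient_min_attained[of A] by blast
  define m where "m = v0 \<bullet> (A *v v0)"
  define w where "w = A *v v0 - m *\<^sub>R v0"
  have symI: "x \<bullet> (A *v y) = y \<bullet> (A *v x)" for x y
    using inner_transpose_mult[of x A y] sym by (simp add: inner_commute)
  have v0v0: "v0 \<bullet> v0 = 1" using v0 by (simp add: norm_eq_1)
  have ww: "w \<bullet> (A *v v0) - m * (w \<bullet> v0) = w \<bullet> w"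
    by (metis inner_diff_right inner_scaleR_right w_def)
  have "(2 * (w \<bullet> w)) * t + (w \<bullet> (A *v w) - m * (w \<bullet> w)) * t^2 \<ge> 0" for t
  proof -
    have quad: "(v0 + t *\<^sub>R w) \<bullet> (A *v (v0 + t *\<^sub>R w))
        = m + 2 * t * (w \<bullet> (A *v v0)) + t^2 * (w \<bullet> (A *v w))"
      using symI[of v0 w]
      by (simp add: m_def matrix_vector_right_distrib matrix_vector_mult_scaleR inner_add_left
          inner_add_right power2_eq_square algebra_simps)
    have norm_sq: "(v0 + t *\<^sub>R w) \<bullet> (v0 + t *\<^sub>R w) = 1 + 2 * t * (w \<bullet> v0) + t^2 * (w \<bullet> w)"
      using v0v0 by (simp add: inner_add_left inner_add_right power2_eq_square inner_commute[of v0 w]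
          algebra_simps)
    have "m * (1 + 2 * t * (w \<bullet> v0) + t^2 * (w \<bullet> w)) \<le> m + 2 * t * (w \<bullet> (A *v v0)) + t^2 * (w \<bullet> (A *v w))"
      using rayleigh[of "v0 + t *\<^sub>R w"] unfolding quad norm_sq m_def[symmetric] .
    hence "0 \<le> 2 * t * (w \<bullet> (A *v v0) - m * (w \<bullet> v0)) + t^2 * (w \<bullet> (A *v w) - m * (w \<bullet> w))"
      by (simp add: algebra_simps)
    thus ?thesis using ww by (simp add: algebra_simps)
  qed
  hence "w = 0" using quadratic_nonneg_imp_linear_coeff_zero by fastforce
  moreover have "v0 \<noteq> 0" using v0v0 by auto
  ultimately have "m \<in> eigvals A" unfolding eigvals_def w_def by auto
  thus ?thesis using rayleigh unfolding m_def by blast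
qed

lemma symmetric_eigvals_finite:
  fixes A :: "real^'n^'n"
  assumes sym: "transpose A = A"
  shows "finite (eigvals A)"
proof -
  have symI: "x \<bullet> (A *v y) = y \<bullet> (A *v x)" for x y
    using inner_transpose_mult[of x A y] sym by (simp add: inner_commute)
  define e where "e l = (SOME v. v \<noteq> 0 \<and> A *v v = l *\<^sub>R v)" for l
  have e: "e l \<noteq> 0 \<and> A *v e l = l *\<^sub>R e l" if "l \<in> eigvals A" for l
    using that unfolding eigvals_def e_def by (rule CollectE) (rule someI_ex)
  have inj: "inj_on e (eigvals A)"
  proof (rule inj_onI)
    fix x y assume xy: "x \<in> eigvals A" "y \<in> eigvals A" "e x = e y"
    hence "x *\<^sub>R e x = y *\<^sub>R e x" using e[of x] e[of y] by metis
    thus "x = y" using e[OF xy(1)] by simp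
  qed
  have orth: "e l1 \<bullet> e l2 = 0" if "l1 \<in> eigvals A" "l2 \<in> eigvals A" "l1 \<noteq> l2" for l1 l2
  proof -
    have "l2 * (e l1 \<bullet> e l2) = e l1 \<bullet> (A *v e l2)" using e[OF that(2)] by simp
    also have "\<dots> = e l2 \<bullet> (A *v e l1)" by (rule symI)
    also have "\<dots> = l1 * (e l1 \<bullet> e l2)" using e[OF that(1)] by (simp add: inner_commute)
    finally show ?thesis using that(3) by simp
  qed
  have "pairwise orthogonal (e ` eigvals A)"
    unfolding pairwise_def orthogonal_def using orth by blast
  moreover have "0 \<notin> e ` eigvals A" using e by force
  ultimately have "independent (e ` eigvals A)" by (rule pairwise_orthogonal_independent)
  hence "finite (e ` eigvals A)" using independent_bound by blast
  thus ?thesis using inj finite_imageD by blast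
qed

lemma symmetric_lam_min:
  fixes A :: "real^'n^'n"
  assumes sym: "transpose A = A"
  shows "lam_min A \<in> eigvals A" "lam_min A * (v \<bullet> v) \<le> v \<bullet> (A *v v)"
proof -
  obtain m where m: "m \<in> eigvals A" "\<And>v. m * (v \<bullet> v) \<le> v \<bullet> (A *v v)"
    using symmetric_rayleigh_min_eigval[OF sym] by blast
  have fin: "finite (eigvals A)" by (rule symmetric_eigvals_finite[OF sym])
  show "lam_min A \<in> eigvals A" unfolding lam_min_def using fin m(1) by (intro Min_in) auto
  have "lam_min A \<le> m" unfolding lam_min_def using fin m(1) by simp
  hence "lam_min A * (v \<bullet> v) \<le> m * (v \<bullet> v)" by (simp add: mult_right_mono)
  thus "lam_min A * (v \<bullet> v) \<le> v \<bullet> (A *v v)" using m(2)[of v] by linarith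
qed

lemma symmetric_lam_max:
  fixes A :: "real^'n^'n"
  assumes sym: "transpose A = A"
  shows "v \<bullet> (A *v v) \<le> lam_max A * (v \<bullet> v)"
proof -
  have neg_mv: "(- A) *v x = - (A *v x)" for x :: "real^'n"
    by (simp add: vec_eq_iff matrix_vector_mult_def sum_negf)
  have "transpose (- A) = - A" using sym by (simp add: vec_eq_iff transpose_def)
  then obtain m where m: "m \<in> eigvals (- A)" "\<And>v. m * (v \<bullet> v) \<le> v \<bullet> ((- A) *v v)"
    using symmetric_rayleigh_min_eigval by blast
  have "- m \<in> eigvals A" using m(1) unfolding eigvals_def
    by (auto simp: neg_mv) (metis minus_equation_iff scaleR_minus_left)
  hence "- m \<le> lam_max A"
    unfolding lam_max_def using symmetric_eigvals_finite[OF sym] by simp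
  hence "(- m) * (v \<bullet> v) \<le> lam_max A * (v \<bullet> v)" by (intro mult_right_mono) auto
  thus ?thesis using m(2)[of v] by (simp add: neg_mv)
qed

lemma pos_def_lam_min_pos:
  assumes "pos_def A" "transpose A = A"
  shows "0 < lam_min A"
proof -
  obtain v where v: "v \<noteq> 0" "A *v v = lam_min A *\<^sub>R v"
    using symmetric_lam_min(1)[OF assms(2)] unfolding eigvals_def by blast
  have "0 < v \<bullet> (A *v v)" using assms(1) v(1) unfolding pos_def_def by blast
  also have "\<dots> = lam_min A * (v \<bullet> v)" using v(2) by simp
  moreover have "0 < v \<bullet> v" using v(1) by simp
  ultimately show ?thesis by (simp add: zero_less_mult_iff)
qed

lemma transpose_add_transpose: "transpose (X + transpose X) = X + transpose (X :: real^'n^'n)"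
  by (simp add: vec_eq_iff transpose_def)

lemma q1_pos: "pos_def (X + transpose X) \<Longrightarrow> 0 < q1 X"
  unfolding q1_def using pos_def_lam_min_pos transpose_add_transpose by auto

lemma lam_min_sym_part_le:
  fixes X :: "real^'n^'n"
  shows "lam_min (X + transpose X) * (v \<bullet> v) \<le> 2 * (v \<bullet> (X *v v))"
proof -
  note transpose_add_transpose
  moreover have "v \<bullet> ((X + transpose X) *v v) = 2 * (v \<bullet> (X *v v))"
    using inner_transpose_mult[of v X v]
    by (simp add: matrix_vector_mult_add_rdistrib inner_add_right inner_commute)
  ultimately show ?thesis using symmetric_lam_min(2) by metis
qed

lemma norm_mult_vec_sq_le_lam_max:
  fixes X :: "real^'n^'n"
  shows "(norm (X *v v))^2 \<le> lam_max (transpose X ** X) * (v \<bullet> v)"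
proof -
  have "transpose (transpose X ** X) = transpose X ** X" by (simp add: matrix_transpose_mul)
  moreover have "v \<bullet> ((transpose X ** X) *v v) = (norm (X *v v))^2"
    by (simp only: matrix_vector_mul_assoc[symmetric] inner_transpose_mult)
       (simp add: power2_norm_eq_inner)
  ultimately show ?thesis using symmetric_lam_max by metis
qed

lemma lam_max_gram_nonneg: "0 \<le> lam_max (transpose X ** (X :: real^'n^'n))"
  using norm_mult_vec_sq_le_lam_max[of X "axis undefined 1"]
  by (simp add: inner_axis_axis) (meson order_trans zero_le_power2)

lemma spec_norm_mult_vec_le: "norm (A *v x) \<le> spec_norm A * norm x"
  unfolding spec_norm_def by (rule onorm) simp

lemma spec_norm_nonneg: "0 \<le> spec_norm A"
  unfolding spec_norm_def by (rule onorm_pos_le) simp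

lemma spec_norm_le: "(\<And>x. norm (A *v x) \<le> c * norm x) \<Longrightarrow> spec_norm (A::real^'n^'m) \<le> c"
  unfolding spec_norm_def by (rule onorm_le)

lemma spec_norm_mult_le: "spec_norm (A ** B) \<le> spec_norm A * spec_norm (B::real^'n^'m)"
proof (rule spec_norm_le)
  fix x
  have "norm ((A ** B) *v x) \<le> spec_norm A * norm (B *v x)"
    by (simp add: matrix_vector_mul_assoc[symmetric] spec_norm_mult_vec_le)
  also have "\<dots> \<le> spec_norm A * (spec_norm B * norm x)"
    by (rule mult_left_mono[OF spec_norm_mult_vec_le spec_norm_nonneg])
  finally show "norm ((A ** B) *v x) \<le> spec_norm A * spec_norm B * norm x" by (simp add: mult.assoc)
qed

lemma norm_matrix_mul3_mult_vec_le:
  "norm ((A ** B ** C) *v x) \<le> spec_norm A * spec_norm B * spec_norm C * norm (x::real^'n)"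
proof -
  have "norm ((A ** B ** C) *v x) \<le> spec_norm (A ** B) * spec_norm C * norm x"
    using spec_norm_mult_le[of "A ** B" C] spec_norm_mult_vec_le[of "A ** B ** C" x]
    by (meson mult_right_mono norm_ge_zero order_trans)
  also have "\<dots> \<le> spec_norm A * spec_norm B * spec_norm C * norm x"
    by (intro mult_right_mono spec_norm_mult_le spec_norm_nonneg norm_ge_zero)
  finally show ?thesis .
qed

lemma spec_norm_mprod_le:
  "spec_norm (mprod f k n) \<le> (\<Prod>j\<in>{Suc k..n}. spec_norm (f j :: real^'n^'n))"
proof (induction "n - k" arbitrary: k)
  case 0
  hence "mprod f k n = mat 1" "{Suc k..n} = {}" unfolding mprod_def by auto
  thus ?case by (simp add: spec_norm_le)
next
  case (Suc d)
  hence kn: "k < n" by simp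
  hence "[Suc k..<Suc n] = Suc k # [Suc (Suc k)..<Suc n]" by (simp add: upt_conv_Cons)
  hence "mprod f k n = f (Suc k) ** mprod f (Suc k) n" unfolding mprod_def by simp
  hence "spec_norm (mprod f k n) \<le> spec_norm (f (Suc k)) * spec_norm (mprod f (Suc k) n)"
    by (simp add: spec_norm_mult_le)
  also have "\<dots> \<le> spec_norm (f (Suc k)) * (\<Prod>j\<in>{Suc (Suc k)..n}. spec_norm (f j))"
    using Suc by (intro mult_left_mono spec_norm_nonneg) simp_all
  also have "\<dots> = (\<Prod>j\<in>{Suc k..n}. spec_norm (f j))"
    using kn by (simp add: prod.atLeast_Suc_atMost)
  finally show ?case .
qed

subsection \<open>Contraction of the factors \<open>I - c X\<close>\<close>

lemma spec_norm_id_minus_scaleR_le: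
  fixes X :: "real^'n^'n"
  assumes "0 \<le> c"
  shows "spec_norm (mat 1 - c *\<^sub>R X) \<le>
    sqrt (exp (- c * lam_min (X + transpose X) + c^2 * lam_max (transpose X ** X)))"
proof (rule spec_norm_le)
  fix v :: "real^'n"
  let ?L = "lam_min (X + transpose X)" and ?M = "lam_max (transpose X ** X)"
  have "(norm (v - c *\<^sub>R (X *v v)))^2
      = v \<bullet> v - c * (2 * (v \<bullet> (X *v v))) + c^2 * ((X *v v) \<bullet> (X *v v))"
    by (simp only: power2_norm_eq_inner)
       (simp add: inner_diff_left inner_diff_right inner_commute power2_eq_square algebra_simps)
  also have "\<dots> \<le> v \<bullet> v - c * (?L * (v \<bullet> v)) + c^2 * (?M * (v \<bullet> v))"
    using assms lam_min_sym_part_le[of X v] norm_mult_vec_sq_le_lam_max[of X v]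
    by (intro add_mono diff_mono mult_left_mono) (auto simp: power2_norm_eq_inner)
  also have "\<dots> = (1 + (- c * ?L + c^2 * ?M)) * (norm v)^2"
    by (simp add: power2_norm_eq_inner algebra_simps)
  also have "\<dots> \<le> exp (- c * ?L + c^2 * ?M) * (norm v)^2"
    by (rule mult_right_mono) auto
  finally have "(norm (v - c *\<^sub>R (X *v v)))^2 \<le> exp (- c * ?L + c^2 * ?M) * (norm v)^2" .
  moreover have "(mat 1 - c *\<^sub>R X) *v v = v - c *\<^sub>R (X *v v)"
    by (simp add: matrix_vector_mult_diff_rdistrib scaleR_matrix_vector_assoc)
  ultimately show "norm ((mat 1 - c *\<^sub>R X) *v v) \<le> sqrt (exp (- c * ?L + c^2 * ?M)) * norm v"
    by (metis real_le_rsqrt real_sqrt_mult real_sqrt_abs abs_norm_cancel)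
qed

lemma sqrt_exp_double: "sqrt (exp (2 * y)) = exp y"
  by (simp add: exp_double real_sqrt_mult)

lemma spec_norm_id_minus_scaleR_le_exp_mu:
  fixes X :: "real^'n^'n"
  assumes "0 \<le> c" "c \<le> 1"
  shows "spec_norm (mat 1 - c *\<^sub>R X) \<le> exp (- q1 X * c) * sqrt (exp (c * (mu X + 2 * q1 X)))"
proof -
  let ?L = "lam_min (X + transpose X)" and ?M = "lam_max (transpose X ** X)"
  have "c^2 \<le> c" using assms by (simp add: power2_eq_square mult_left_le_one_le)
  hence "c^2 * ?M \<le> c * ?M" using lam_max_gram_nonneg[of X] by (intro mult_right_mono) auto
  hence "- c * ?L + c^2 * ?M \<le> 2 * (- q1 X * c) + c * (mu X + 2 * q1 X)"
    by (simp add: mu_def q1_def algebra_simps)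
  hence "sqrt (exp (- c * ?L + c^2 * ?M)) \<le> sqrt (exp (2 * (- q1 X * c)) * exp (c * (mu X + 2 * q1 X)))"
    by (simp add: exp_add[symmetric])
  also have "\<dots> = exp (- q1 X * c) * sqrt (exp (c * (mu X + 2 * q1 X)))"
    by (simp only: real_sqrt_mult sqrt_exp_double)
  finally show ?thesis using spec_norm_id_minus_scaleR_le[where X=X, OF assms(1)] by linarith
qed

lemma spec_norm_id_minus_scaleR_le_exp:
  fixes X :: "real^'n^'n"
  assumes "0 \<le> c" "c * lam_max (transpose X ** X) \<le> lam_min (X + transpose X) / 2"
  shows "spec_norm (mat 1 - c *\<^sub>R X) \<le> exp (- q1 X * c)"
proof -
  let ?L = "lam_min (X + transpose X)" and ?M = "lam_max (transpose X ** X)"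
  have "c^2 * ?M \<le> c * (?L / 2)" using mult_left_mono[OF assms(2) assms(1)]
    by (simp add: power2_eq_square mult.assoc)
  hence "- c * ?L + c^2 * ?M \<le> 2 * (- q1 X * c)"
    by (simp add: q1_def algebra_simps)
  hence "sqrt (exp (- c * ?L + c^2 * ?M)) \<le> exp (- q1 X * c)"
    by (metis exp_le_cancel_iff real_sqrt_le_iff sqrt_exp_double)
  thus ?thesis using spec_norm_id_minus_scaleR_le[where X=X, OF assms(1)] by linarith
qed

lemma step_pos: "0 < step a n"
  unfolding step_def by simp

lemma step_le_1: "0 \<le> a \<Longrightarrow> step a n \<le> 1"
  unfolding step_def using ge_one_powr_ge_zero[of "real n + 1" a] by (simp add: powr_minus_divide)

text \<open>The denominator in \<open>K_const\<close> is \<open>\<lambda>\<^sub>m\<^sub>i\<^sub>n(X + X\<^sup>T) - 2q\<^sub>1 = \<lambda>\<^sub>m\<^sub>i\<^sub>n(X + X\<^sup>T)/2\<close>.\<close>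
lemma step_mult_lam_max_le_beyond_K_const:
  fixes X :: "real^'n^'n"
  assumes pd: "pos_def (X + transpose X)" and a0: "0 < a" and jK: "K_const a X \<le> j"
  shows "step a j * lam_max (transpose X ** X) \<le> lam_min (X + transpose X) / 2"
proof -
  let ?L = "lam_min (X + transpose X)" and ?M = "lam_max (transpose X ** X)"
  have L0: "?L > 0" using q1_pos[OF pd] by (simp add: q1_def)
  show ?thesis
  proof (cases "?M \<le> 0")
    case True
    hence "step a j * ?M \<le> 0" using step_pos[of a j] by (simp add: mult_nonneg_nonpos)
    thus ?thesis using L0 by linarith
  next
    case False
    define R where "R = ?M / (?L / 2)"
    have R0: "R > 0" using False L0 by (simp add: R_def)
    have "R powr (1 / a) \<le> real (K_const a X)"
      unfolding K_const_def R_def q1_def by (simp add: real_nat_ceiling_ge)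
    also have "\<dots> \<le> real j + 1" using jK by simp
    finally have "(R powr (1 / a)) powr a \<le> (real j + 1) powr a"
      using a0 by (intro powr_mono2) auto
    hence Rj: "R \<le> (real j + 1) powr a" using a0 R0 by (simp add: powr_powr)
    have "step a j * ?M = ?M / (real j + 1) powr a"
      unfolding step_def by (simp add: powr_minus_divide)
    also have "\<dots> \<le> ?M / R" using False R0 Rj by (intro divide_left_mono) auto
    also have "\<dots> = ?L / 2" using L0 False by (simp add: R_def)
    finally show ?thesis .
  qed
qed

lemma C_U_nonneg: "b \<le> a \<Longrightarrow> 0 \<le> C_U a b X"
  unfolding C_U_def using spec_norm_nonneg[of X] by simp

lemma C_theta_ge_1: "1 \<le> C_theta a X"
  unfolding C_theta_def by simp

lemma sqrt_prod_exp_le_C_theta: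
  assumes "l2 \<le> K_const a X"
  shows "sqrt (\<Prod>l\<in>{l1..l2}. exp (step a l * (mu X + 2 * q1 X))) \<le> C_theta a X"
proof (cases "l1 \<le> l2")
  case True
  let ?f = "\<lambda>l1 l2. (\<Prod>l\<in>{l1..l2}. exp (step a l * (mu X + 2 * q1 X)))"
  let ?S = "{?f l1 l2 | l1 l2. l1 \<le> l2 \<and> l2 \<le> K_const a X}"
  have "?S \<subseteq> (\<lambda>(l1, l2). ?f l1 l2) ` ({..K_const a X} \<times> {..K_const a X})" by force
  hence "finite ?S" by (rule finite_subset) simp
  moreover have "?f l1 l2 \<in> ?S" using True assms by blast
  ultimately have "sqrt (?f l1 l2) \<le> sqrt (Max ?S)" by simp
  thus ?thesis unfolding C_theta_def by linarith
qed (simp add: C_theta_def)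

lemma sqrt_prod: "finite A \<Longrightarrow> sqrt (prod f A) = (\<Prod>x\<in>A. sqrt (f x))"
  by (induct rule: finite_induct) (simp_all add: real_sqrt_mult)

lemma spec_norm_mprod_id_minus_step_le:
  fixes X :: "real^'n^'n"
  assumes pd: "pos_def (X + transpose X)" and a0: "0 < a"
  shows "spec_norm (mprod (\<lambda>j. mat 1 - step a j *\<^sub>R X) k n)
     \<le> C_theta a X * exp (- q1 X * (\<Sum>j\<in>{Suc k..n}. step a j))"
proof -
  let ?K = "K_const a X" and ?e = "\<lambda>j. exp (step a j * (mu X + 2 * q1 X))"
  define G where "G j = (if j \<le> ?K then sqrt (?e j) else 1)" for j
  have factor: "spec_norm (mat 1 - step a j *\<^sub>R X) \<le> exp (- q1 X * step a j) * G j" for j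
  proof (cases "j \<le> ?K")
    case True
    thus ?thesis using spec_norm_id_minus_scaleR_le_exp_mu[of "step a j" X] step_pos[of a j]
        step_le_1[of a j] a0 by (simp add: G_def)
  next
    case False
    thus ?thesis using spec_norm_id_minus_scaleR_le_exp[of "step a j" X] step_pos[of a j]
        step_mult_lam_max_le_beyond_K_const[OF pd a0, of j] by (simp add: G_def)
  qed
  have "(\<Prod>j\<in>{Suc k..n}. G j) = sqrt (\<Prod>j\<in>{Suc k..min n ?K}. ?e j)"
  proof -
    have "{j\<in>{Suc k..n}. j \<le> ?K} = {Suc k..min n ?K}" by auto
    thus ?thesis unfolding G_def by (simp add: prod.inter_filter[symmetric] sqrt_prod)
  qed
  also have "\<dots> \<le> C_theta a X" by (rule sqrt_prod_exp_le_C_theta) simp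
  finally have early: "(\<Prod>j\<in>{Suc k..n}. G j) \<le> C_theta a X" .
  have "spec_norm (mprod (\<lambda>j. mat 1 - step a j *\<^sub>R X) k n)
      \<le> (\<Prod>j\<in>{Suc k..n}. exp (- q1 X * step a j) * G j)"
    by (rule order_trans[OF spec_norm_mprod_le prod_mono]) (use factor spec_norm_nonneg in auto)
  also have "\<dots> = exp (- q1 X * (\<Sum>j\<in>{Suc k..n}. step a j)) * (\<Prod>j\<in>{Suc k..n}. G j)"
    by (simp add: prod.distrib exp_sum sum_distrib_left)
  also have "\<dots> \<le> exp (- q1 X * (\<Sum>j\<in>{Suc k..n}. step a j)) * C_theta a X"
    using early by simp
  finally show ?thesis by (simp add: mult.commute)
qed

subsection \<open>The step-size ratio \<open>\<alpha>\<^sub>k/\<beta>\<^sub>k\<close>\<close>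

lemma one_plus_powr_le:
  fixes x c :: real
  assumes "0 \<le> x" "0 \<le> c" "c \<le> 1"
  shows "(1 + x) powr c \<le> 1 + c * x"
proof -
  have "exp ((1 - c) *\<^sub>R 0 + c *\<^sub>R ln (1 + x)) \<le> (1 - c) * exp 0 + c * exp (ln (1 + x))"
    using assms by (intro convex_onD[OF exp_convex]) auto
  thus ?thesis using assms by (simp add: powr_def algebra_simps)
qed

lemma step_ratio_pred_eq:
  assumes "1 \<le> k"
  shows "step a (k - 1) / step b (k - 1) = (step a k / step b k) * (1 + 1 / real k) powr (a - b)"
proof -
  have kpos: "real k > 0" using assms by simp
  have ratio: "step a i / step b i = (real i + 1) powr (b - a)" for i
    unfolding step_def by (simp add: powr_diff[symmetric])
  have "real (k - 1) + 1 = real k" using assms by simp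
  hence "step a (k - 1) / step b (k - 1) = real k powr (b - a)" by (simp add: ratio)
  also have "\<dots> = (real k + 1) powr (b - a) * ((real k + 1) / real k) powr (a - b)"
    using kpos by (simp add: powr_divide powr_diff powr_minus_divide divide_simps powr_add)
  also have "(real k + 1) / real k = 1 + 1 / real k" using kpos by (simp add: field_simps)
  finally show ?thesis by (simp add: ratio)
qed

lemma step_ratio_pred_bounds:
  assumes "b \<le> a" "a - b \<le> 1" "1 \<le> k"
  shows "step a k / step b k \<le> step a (k - 1) / step b (k - 1)"
    and "step a (k - 1) / step b (k - 1) \<le> (step a k / step b k) * (1 + (a - b) / real k)"
proof -
  have r0: "0 < step a k / step b k" using step_pos by (simp add: divide_pos_pos)
  have "1 \<le> (1 + 1 / real k) powr (a - b)" using assms by (intro ge_one_powr_ge_zero) auto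
  thus "step a k / step b k \<le> step a (k - 1) / step b (k - 1)"
    unfolding step_ratio_pred_eq[OF assms(3)] using mult_left_mono[of 1 _ "step a k / step b k"] r0
    by simp
  have "(1 + 1 / real k) powr (a - b) \<le> 1 + (a - b) * (1 / real k)"
    using assms by (intro one_plus_powr_le) auto
  thus "step a (k - 1) / step b (k - 1) \<le> (step a k / step b k) * (1 + (a - b) / real k)"
    unfolding step_ratio_pred_eq[OF assms(3)] using r0 by (intro mult_left_mono) simp_all
qed

lemma inverse_le_twice_step:
  assumes "a < 1" "1 \<le> k"
  shows "1 / real k \<le> 2 * step a k"
proof -
  have "(real k + 1) powr (- 1) \<le> (real k + 1) powr (- a)" using assms by (intro powr_mono) auto
  hence "1 / (real k + 1) \<le> step a k" unfolding step_def by (simp add: powr_minus_divide)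
  moreover have "1 / real k \<le> 2 / (real k + 1)" using assms by (simp add: field_simps)
  ultimately show ?thesis by simp
qed

lemma spec_norm_step_ratio_diff_le:
  fixes X :: "real^'n^'n"
  assumes b0: "0 < b" and ba: "b < a" and a1: "a < 1" and k1: "1 \<le> k"
  shows "spec_norm ((step a k / step b k) *\<^sub>R mat 1
            - (step a (k - 1) / step b (k - 1)) *\<^sub>R (mat 1 - step a k *\<^sub>R X))
     \<le> C_U a b X * (step a k * (step a k / step b k))"
proof (rule spec_norm_le)
  fix v :: "real^'n"
  define r where "r = step a k / step b k"
  define r' where "r' = step a (k - 1) / step b (k - 1)"
  define \<alpha> where "\<alpha> = step a k"
  define N where "N = spec_norm X"
  define c where "c = a - b"
  have c0: "0 < c" "c < 1" using assms by (auto simp: c_def)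
  have N0: "0 \<le> N" by (simp add: N_def spec_norm_nonneg)
  have kpos: "1 \<le> real k" using k1 by simp
  have r0: "0 < r" unfolding r_def using step_pos by (simp add: divide_pos_pos)
  have \<alpha>0: "0 < \<alpha>" by (simp add: \<alpha>_def step_pos)
  have r_le: "r \<le> r'" and r'_le: "r' \<le> r * (1 + c / real k)"
    using step_ratio_pred_bounds[of b a k] assms by (simp_all add: r_def r'_def c_def)
  have eq: "((step a k / step b k) *\<^sub>R mat 1
            - (step a (k - 1) / step b (k - 1)) *\<^sub>R (mat 1 - step a k *\<^sub>R X)) *v v
        = (r - r') *\<^sub>R v + (r' * \<alpha>) *\<^sub>R (X *v v)"
    by (simp add: matrix_vector_mult_diff_rdistrib scaleR_matrix_vector_assoc[symmetric] r_def r'_def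
        \<alpha>_def algebra_simps)
  have "norm ((r - r') *\<^sub>R v + (r' * \<alpha>) *\<^sub>R (X *v v))
      \<le> \<bar>r - r'\<bar> * norm v + \<bar>r' * \<alpha>\<bar> * norm (X *v v)"
    by (rule order_trans[OF norm_triangle_ineq]) simp
  also have "\<dots> \<le> (r * c * (2 * \<alpha>)) * norm v + (r * (1 + c) * \<alpha>) * (N * norm v)"
  proof (rule add_mono)
    have "\<bar>r - r'\<bar> \<le> r * c * (1 / real k)" using r'_le r_le by (simp add: algebra_simps)
    also have "\<dots> \<le> r * c * (2 * \<alpha>)"
      using inverse_le_twice_step[OF a1 k1] r0 c0 by (intro mult_left_mono) (auto simp: \<alpha>_def)
    finally show "\<bar>r - r'\<bar> * norm v \<le> (r * c * (2 * \<alpha>)) * norm v" by (rule mult_right_mono) simp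
  next
    have "c / real k \<le> c" using c0 kpos by (simp add: divide_le_eq)
    hence "r' \<le> r * (1 + c)" using r'_le r0 by (meson add_left_mono mult_left_mono order_trans less_imp_le)
    hence "\<bar>r' * \<alpha>\<bar> \<le> r * (1 + c) * \<alpha>" using r_le r0 \<alpha>0 by (simp add: mult_right_mono)
    moreover have "norm (X *v v) \<le> N * norm v" unfolding N_def by (rule spec_norm_mult_vec_le)
    ultimately show "\<bar>r' * \<alpha>\<bar> * norm (X *v v) \<le> (r * (1 + c) * \<alpha>) * (N * norm v)"
      by (intro mult_mono) auto
  qed
  also have "\<dots> = (r * \<alpha>) * (2 * c + (1 + c) * N) * norm v" by (simp add: algebra_simps)
  also have "\<dots> \<le> (r * \<alpha>) * C_U a b X * norm v"
  proof -
    have "2 * c + (1 + c) * N \<le> C_U a b X" unfolding C_U_def N_def[symmetric] c_def[symmetric]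
      using c0 N0 by (simp add: algebra_simps)
    thus ?thesis using r0 \<alpha>0 by (intro mult_right_mono mult_left_mono) auto
  qed
  finally show "norm (((step a k / step b k) *\<^sub>R mat 1
            - (step a (k - 1) / step b (k - 1)) *\<^sub>R (mat 1 - step a k *\<^sub>R X)) *v v)
      \<le> C_U a b X * (step a k * (step a k / step b k)) * norm v"
    unfolding eq by (simp add: r_def \<alpha>_def algebra_simps)
qed

lemma moderate_step_ratio_mult_le:
  assumes md: "moderate a b q n0 u" and u_pos: "\<forall>k. u k > 0" and k: "n0 \<le> k" "k \<le> n"
  shows "(step a k / step b k) * u k
     \<le> (step a n / step b n) * u n * exp ((q / 2) * (\<Sum>j\<in>{Suc k..n}. step a j))"
  using k
proof (induction "n - k" arbitrary: k)
  case 0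
  thus ?case by simp
next
  case (Suc d)
  hence kn: "k < n" by simp
  have IH: "(step a (Suc k) / step b (Suc k)) * u (Suc k)
     \<le> (step a n / step b n) * u n * exp ((q / 2) * (\<Sum>j\<in>{Suc (Suc k)..n}. step a j))"
    using Suc kn by simp
  have m: "u k / u (Suc k)
      \<le> step a (Suc k) / step a k * (step b k / step b (Suc k)) * exp ((q / 2) * step a (Suc k))"
    using md Suc(3) unfolding moderate_def by blast
  have pos: "u (Suc k) > 0" "step a k > 0" "step b k > 0" "step b (Suc k) > 0"
    using u_pos step_pos by auto
  have "(step a k / step b k) * u k \<le> (step a k / step b k) * (u (Suc k)
      * (step a (Suc k) / step a k * (step b k / step b (Suc k)) * exp ((q / 2) * step a (Suc k))))"
    using m pos by (intro mult_left_mono) (auto simp: divide_le_eq mult.commute)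
  also have "\<dots> = ((step a (Suc k) / step b (Suc k)) * u (Suc k)) * exp ((q / 2) * step a (Suc k))"
    using pos by (simp add: field_simps)
  also have "\<dots> \<le> (step a n / step b n) * u n * exp ((q / 2) * (\<Sum>j\<in>{Suc (Suc k)..n}. step a j))
      * exp ((q / 2) * step a (Suc k))"
    using IH by (rule mult_right_mono) simp
  also have "\<dots> = (step a n / step b n) * u n * exp ((q / 2) * (\<Sum>j\<in>{Suc k..n}. step a j))"
    using kn by (simp add: sum.atLeast_Suc_atMost exp_add[symmetric] algebra_simps)
  finally show ?case .
qed

subsection \<open>The discounted sum of step sizes\<close>

lemma mult_exp_le_exp_diff:
  fixes c x y :: real
  assumes "0 < c" "0 \<le> x" "x \<le> 1"
  shows "x * exp (- c * y) \<le> exp c / c * (exp (- c * y) - exp (- c * (x + y)))"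
proof -
  have "c * x \<le> exp (c * x) - 1" using exp_ge_add_one_self[of "c * x"] by linarith
  also have "\<dots> = exp (c * x) * (1 - exp (- (c * x)))" by (simp add: algebra_simps exp_minus)
  also have "\<dots> \<le> exp c * (1 - exp (- (c * x)))"
    using assms by (intro mult_right_mono) (auto simp: mult_left_le_one_le)
  finally have "c * x * exp (- c * y) \<le> exp c * (1 - exp (- (c * x))) * exp (- c * y)"
    by (rule mult_right_mono) simp
  moreover have "exp (- c * (x + y)) = exp (- (c * x)) * exp (- c * y)"
    by (simp add: exp_add[symmetric] algebra_simps)
  ultimately show ?thesis using assms by (simp add: field_simps)
qed

lemma sum_step_mult_exp_tail_le:
  assumes c0: "0 < c" and a0: "0 < a" and "m \<le> n"
  shows "(\<Sum>k\<in>{Suc m..n}. step a k * exp (- c * (\<Sum>j\<in>{Suc k..n}. step a j))) \<le> exp c / c"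
proof -
  define E where "E k = exp (- c * (\<Sum>j\<in>{Suc k..n}. step a j))" for k
  have "(\<Sum>k\<in>{Suc m..n}. step a k * E k) = (\<Sum>i\<in>{m..<n}. step a (Suc i) * E (Suc i))"
    by (simp only: atLeastLessThanSuc_atLeastAtMost[symmetric] sum.atLeast_Suc_lessThan_Suc_shift
        comp_def)
  also have "\<dots> \<le> (\<Sum>i\<in>{m..<n}. exp c / c * (E (Suc i) - E i))"
  proof (rule sum_mono)
    fix i assume "i \<in> {m..<n}"
    hence "(\<Sum>j\<in>{Suc i..n}. step a j) = step a (Suc i) + (\<Sum>j\<in>{Suc (Suc i)..n}. step a j)"
      by (simp add: sum.atLeast_Suc_atMost)
    thus "step a (Suc i) * E (Suc i) \<le> exp c / c * (E (Suc i) - E i)"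
      unfolding E_def
      using mult_exp_le_exp_diff[OF c0, of "step a (Suc i)" "\<Sum>j\<in>{Suc (Suc i)..n}. step a j"]
        step_pos[of a "Suc i"] step_le_1[of a "Suc i"] a0
      by simp
  qed
  also have "\<dots> = exp c / c * (E n - E m)"
    using assms(3) by (simp only: sum_distrib_left[symmetric] sum_Suc_diff')
  also have "\<dots> \<le> exp c / c * 1"
    using c0 by (intro mult_left_mono) (auto simp: E_def)
  finally show ?thesis by (simp add: E_def)
qed

lemma T_next_summand_le:
  fixes X W V :: "real^'n^'n"
  assumes "0 < b" "b < a" "a < 1" and pd: "pos_def (X + transpose X)"
    and u_pos: "\<forall>k. u k > 0" and md: "moderate a b (q1 X) n0 u"
    and k: "n0 < k" "k \<le> n" and wk: "norm (x :: real^'n) \<le> u k"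
  shows "norm ((mprod (\<lambda>j. mat 1 - step a j *\<^sub>R X) k n
        ** ((step a k / step b k) *\<^sub>R mat 1
            - (step a (k - 1) / step b (k - 1)) *\<^sub>R (mat 1 - step a k *\<^sub>R X))
        ** W ** V) *v x)
    \<le> C_theta a X * C_U a b X * spec_norm (W ** V) * (step a n / step b n) * u n
       * (step a k * exp (- (q1 X / 2) * (\<Sum>j\<in>{Suc k..n}. step a j)))"
    (is "norm ((?P ** ?D ** W ** V) *v x) \<le> ?C * (_ * exp (- (q1 X / 2) * ?S))")
proof -
  let ?r = "\<lambda>i. step a i / step b i"
  have P: "spec_norm ?P \<le> C_theta a X * exp (- q1 X * ?S)"
    using assms(1,2) by (intro spec_norm_mprod_id_minus_step_le[OF pd]) simp
  have D: "spec_norm ?D \<le> C_U a b X * (step a k * ?r k)"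
    using assms(1-3) k by (intro spec_norm_step_ratio_diff_le) simp_all
  have ratio: "?r k * u k \<le> ?r n * u n * exp ((q1 X / 2) * ?S)"
    using k by (intro moderate_step_ratio_mult_le[OF md u_pos]) simp_all
  have nonneg: "0 \<le> C_theta a X" "0 \<le> C_U a b X" "0 \<le> spec_norm (W ** V)" "0 \<le> step a k"
    "0 < step b k"
    using C_theta_ge_1[of a X] C_U_nonneg[of b a X] assms(2) spec_norm_nonneg step_pos[of a k]
      step_pos[of b k]
    by simp_all
  have "norm ((?P ** ?D ** W ** V) *v x) \<le> spec_norm ?P * spec_norm ?D * spec_norm (W ** V) * norm x"
    using norm_matrix_mul3_mult_vec_le[of ?P ?D "W ** V" x] by (simp add: matrix_mul_assoc)
  also have "\<dots> \<le> (C_theta a X * exp (- q1 X * ?S)) * (C_U a b X * (step a k * ?r k))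
      * spec_norm (W ** V) * u k"
    using P D wk nonneg spec_norm_nonneg[of ?P] spec_norm_nonneg[of ?D]
    by (intro mult_mono) (auto intro!: mult_nonneg_nonneg divide_nonneg_pos)
  also have "\<dots> = (C_theta a X * C_U a b X * spec_norm (W ** V) * step a k * exp (- q1 X * ?S))
      * (?r k * u k)"
    by (simp add: algebra_simps)
  also have "\<dots> \<le> (C_theta a X * C_U a b X * spec_norm (W ** V) * step a k * exp (- q1 X * ?S))
      * (?r n * u n * exp ((q1 X / 2) * ?S))"
    using ratio nonneg by (intro mult_left_mono) simp_all
  also have "\<dots> = ?C * (step a k * exp (- (q1 X / 2) * ?S))"
    by (simp add: mult_exp_exp algebra_simps)
  finally show ?thesis .
qed

theorem mainTheorem11:
  fixes a b :: real and X1 W1 W2 :: "real^'d^'d" and u :: "nat \<Rightarrow> real"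
    and w :: "nat \<Rightarrow> real^'d" and ws :: "real^'d" and n0 n :: nat
  assumes "0 < b" "b < a" "a < 1"
    and "pos_def (X1 + transpose X1)"
    and "invertible W2"
    and "n0 \<le> n"
    and "\<forall>k. u k > 0"
    and "moderate a b (q1 X1) n0 u"
    and "\<forall>k. n0 \<le> k \<and> k \<le> n \<longrightarrow> norm (w k - ws) \<le> u k"
  shows "norm (T_next a b X1 W1 W2 w ws n0 n)
    \<le> 2 * exp (q1 X1 / 2) / q1 X1 * C_U a b X1 * spec_norm (W1 ** matrix_inv W2)
       * C_theta a X1 * (step a n / step b n) * u n"
proof -
  define C where "C = C_theta a X1 * C_U a b X1 * spec_norm (W1 ** matrix_inv W2)
    * (step a n / step b n) * u n"
  have q0: "0 < q1 X1 / 2" using q1_pos[OF assms(4)] by simp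
  have C0: "0 \<le> C"
    using C_theta_ge_1[of a X1] C_U_nonneg[of b a X1] spec_norm_nonneg[of "W1 ** matrix_inv W2"]
      step_pos[of a n] step_pos[of b n] assms(2,7)
    by (simp add: C_def less_imp_le)
  have "norm (T_next a b X1 W1 W2 w ws n0 n)
      \<le> (\<Sum>k\<in>{n0+1..n}. C * (step a k * exp (- (q1 X1 / 2) * (\<Sum>j\<in>{Suc k..n}. step a j))))"
    unfolding T_next_def C_def using assms
    by (intro order_trans[OF norm_sum sum_mono] T_next_summand_le) auto
  also have "\<dots> = C * (\<Sum>k\<in>{Suc n0..n}. step a k * exp (- (q1 X1 / 2) * (\<Sum>j\<in>{Suc k..n}. step a j)))"
    by (simp add: sum_distrib_left)
  also have "\<dots> \<le> C * (exp (q1 X1 / 2) / (q1 X1 / 2))"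
    using sum_step_mult_exp_tail_le[OF q0, of a n0 n] assms(1,2,6) C0 by (intro mult_left_mono) auto
  finally show ?thesis by (simp add: C_def field_simps)
qed

end
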